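(* Let $P,Q\in\mathbb{C}[z_1,\dots,z_d]$ be nonzero polynomials all of whose coefficients are real and non-negative. Then \[ \|P\,Q\|_a\ge\|P\|_a\,\|Q\|_a . \]
   Context: For multi-indices $\alpha\in\mathbb{N}^d$ write $z^\alpha=z_1^{\alpha_1}\cdots z_d^{\alpha_d}$ and $\alpha!=\alpha_1!\cdots\alpha_d!$. The apolar inner product on $\mathbb{C}[z_1,\dots,z_d]$ is $\langle \sum c_\alpha z^\alpha,\sum d_\alpha z^\alpha\rangle_a=\sum_\alpha\alpha!\,c_\alpha\overline{d_\alpha}$, with norm $\|P\|_a=\sqrt{\langle P,P\rangle_a}$. *)

theory Defs
  imports Complex_Main "HOL-Library.Poly_Mapping"
begin

text \<open>Polynomials in d complex variables z_0,...,z_(d-1) are represented as finitely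
supported maps from multi-indices (poly_mapping nat nat) to complex coefficients;
multiplication is the library's convolution product.\<close>

definition in_vars :: "nat \<Rightarrow> ((nat \<Rightarrow>\<^sub>0 nat) \<Rightarrow>\<^sub>0 complex) \<Rightarrow> bool" where
  "in_vars d P \<longleftrightarrow> (\<forall>a \<in> Poly_Mapping.keys P. Poly_Mapping.keys a \<subseteq> {..<d})"

definition mfact :: "(nat \<Rightarrow>\<^sub>0 nat) \<Rightarrow> real" where
  "mfact \<alpha> = (\<Prod>i\<in>Poly_Mapping.keys \<alpha>. fact (Poly_Mapping.lookup \<alpha> i))"

definition apolar_inner :: "((nat \<Rightarrow>\<^sub>0 nat) \<Rightarrow>\<^sub>0 complex) \<Rightarrow> ((nat \<Rightarrow>\<^sub>0 nat) \<Rightarrow>\<^sub>0 complex) \<Rightarrow> complex" where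
  "apolar_inner P Q = (\<Sum>\<alpha> \<in> Poly_Mapping.keys P \<union> Poly_Mapping.keys Q. of_real (mfact \<alpha>) * Poly_Mapping.lookup P \<alpha> * cnj (Poly_Mapping.lookup Q \<alpha>))"

definition apolar_norm :: "((nat \<Rightarrow>\<^sub>0 nat) \<Rightarrow>\<^sub>0 complex) \<Rightarrow> real" where
  "apolar_norm P = sqrt (Re (apolar_inner P P))"

end

theory Submission
  imports Defs
begin

text \<open>With non-negative coefficients \<open>p\<^sub>\<alpha>\<close> and \<open>q\<^sub>\<beta>\<close>, the squared norm of \<open>PQ\<close> is
  the sum over \<open>\<gamma>\<close> of \<open>\<gamma>! (\<Sum>\<^bsub>\<alpha>+\<beta>=\<gamma>\<^esub> p\<^sub>\<alpha> q\<^sub>\<beta>)\<^sup>2\<close>. Dropping the non-negative cross terms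
  of these squares bounds it below by the sum over all pairs of \<open>(\<alpha>+\<beta>)! p\<^sub>\<alpha>\<^sup>2 q\<^sub>\<beta>\<^sup>2\<close>, and
  \<open>\<alpha>! \<beta>! \<le> (\<alpha>+\<beta>)!\<close> (a multinomial coefficient is at least 1) bounds this below by
  \<open>\<parallel>P\<parallel>\<^sup>2 \<parallel>Q\<parallel>\<^sup>2\<close>.\<close>

lemma fact_mult_le_fact_add: "fact m * fact n \<le> (fact (m + n) :: 'a::linordered_semidom)"
proof -
  have "fact m * fact n \<le> (fact (m + n) :: nat)"
    by (rule dvd_imp_le[OF fact_fact_dvd_fact]) simp
  then show ?thesis
    by (metis of_nat_fact of_nat_le_iff of_nat_mult)
qed

lemma mfact_eq_prod_superset:
  assumes "finite K" "Poly_Mapping.keys \<alpha> \<subseteq> K"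
  shows "mfact \<alpha> = (\<Prod>i\<in>K. fact (Poly_Mapping.lookup \<alpha> i))"
  unfolding mfact_def
  by (rule prod.mono_neutral_left[OF assms]) (auto simp: in_keys_iff)

lemma mfact_pos: "mfact \<alpha> > 0"
  unfolding mfact_def by (rule prod_pos) auto

lemma mfact_mult_le_mfact_add: "mfact \<alpha> * mfact \<beta> \<le> mfact (\<alpha> + \<beta>)"
proof -
  let ?K = "Poly_Mapping.keys \<alpha> \<union> Poly_Mapping.keys \<beta>"
  have fin: "finite ?K" by simp
  have "mfact \<alpha> * mfact \<beta> =
      (\<Prod>i\<in>?K. fact (Poly_Mapping.lookup \<alpha> i) * fact (Poly_Mapping.lookup \<beta> i))"
    by (simp add: mfact_eq_prod_superset[OF fin] prod.distrib)
  also have "\<dots> \<le> (\<Prod>i\<in>?K. fact (Poly_Mapping.lookup \<alpha> i + Poly_Mapping.lookup \<beta> i))"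
    by (rule prod_mono) (simp add: fact_mult_le_fact_add)
  also have "\<dots> = mfact (\<alpha> + \<beta>)"
    by (subst mfact_eq_prod_superset[OF fin]) (auto simp: lookup_add dest: subsetD[OF keys_add])
  finally show ?thesis .
qed

lemma apolar_norm_eq_sqrt_sum:
  assumes "finite S" "Poly_Mapping.keys F \<subseteq> S"
  shows "apolar_norm F = sqrt (\<Sum>\<alpha>\<in>S. mfact \<alpha> * (cmod (Poly_Mapping.lookup F \<alpha>))\<^sup>2)"
proof -
  have "apolar_inner F F =
      (\<Sum>\<alpha>\<in>Poly_Mapping.keys F. of_real (mfact \<alpha> * (cmod (Poly_Mapping.lookup F \<alpha>))\<^sup>2))"
    unfolding apolar_inner_def of_real_mult complex_norm_square by (simp add: mult.assoc)
  then have "Re (apolar_inner F F) =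
      (\<Sum>\<alpha>\<in>Poly_Mapping.keys F. mfact \<alpha> * (cmod (Poly_Mapping.lookup F \<alpha>))\<^sup>2)"
    by (simp add: Re_sum)
  also have "\<dots> = (\<Sum>\<alpha>\<in>S. mfact \<alpha> * (cmod (Poly_Mapping.lookup F \<alpha>))\<^sup>2)"
    by (rule sum.mono_neutral_left[OF assms]) (auto simp: in_keys_iff)
  finally show ?thesis
    by (simp add: apolar_norm_def)
qed

lemma lookup_times_eq_sum:
  "Poly_Mapping.lookup (f * g) k =
    (\<Sum>x\<in>{x \<in> Poly_Mapping.keys f \<times> Poly_Mapping.keys g. fst x + snd x = k}.
       Poly_Mapping.lookup f (fst x) * Poly_Mapping.lookup g (snd x))"
proof -
  have "Poly_Mapping.lookup (f * g) k =
      (\<Sum>(a, b). Poly_Mapping.lookup f a * Poly_Mapping.lookup g b when k = a + b)"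
    unfolding lookup_mult prod_fun_def[symmetric] by (rule prod_fun_unfold_prod) auto
  also have "\<dots> = (\<Sum>(a, b)\<in>Poly_Mapping.keys f \<times> Poly_Mapping.keys g.
      Poly_Mapping.lookup f a * Poly_Mapping.lookup g b when k = a + b)"
    by (rule Sum_any.expand_superset) (auto simp: in_keys_iff)
  finally show ?thesis
    by (simp add: when_def case_prod_beta sum.inter_filter eq_commute)
qed

lemma convolution_weighted_square_sum_ge:
  fixes f g w :: "'a::comm_monoid_add \<Rightarrow> real"
  assumes "finite A" "finite B"
    and "\<And>x. x \<in> A \<Longrightarrow> 0 \<le> f x" "\<And>y. y \<in> B \<Longrightarrow> 0 \<le> g y"
    and "\<And>z. 0 \<le> w z" "\<And>x y. w x * w y \<le> w (x + y)"
  shows "(\<Sum>x\<in>A. w x * (f x)\<^sup>2) * (\<Sum>y\<in>B. w y * (g y)\<^sup>2)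
    \<le> (\<Sum>z\<in>(\<lambda>(x, y). x + y) ` (A \<times> B).
          w z * (\<Sum>p\<in>{p \<in> A \<times> B. fst p + snd p = z}. f (fst p) * g (snd p))\<^sup>2)"
    (is "_ \<le> (\<Sum>z\<in>?C. w z * (\<Sum>p\<in>?fibre z. ?h p)\<^sup>2)")
proof -
  have fin: "finite (A \<times> B)" "finite ?C"
    using assms(1,2) by simp_all
  have h_nonneg: "0 \<le> ?h p" if "p \<in> A \<times> B" for p
    using that assms(3,4) by auto
  have "(\<Sum>x\<in>A. w x * (f x)\<^sup>2) * (\<Sum>y\<in>B. w y * (g y)\<^sup>2)
      = (\<Sum>p\<in>A \<times> B. (w (fst p) * w (snd p)) * (?h p)\<^sup>2)"
    by (simp add: sum_product sum.cartesian_product case_prod_beta power_mult_distrib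
        algebra_simps)
  also have "\<dots> \<le> (\<Sum>p\<in>A \<times> B. w (fst p + snd p) * (?h p)\<^sup>2)"
    by (rule sum_mono, rule mult_right_mono) (simp_all add: assms(6))
  also have "\<dots> = (\<Sum>z\<in>?C. \<Sum>p\<in>?fibre z. w (fst p + snd p) * (?h p)\<^sup>2)"
    by (rule sum.group[symmetric]) (use fin in \<open>auto simp: case_prod_beta\<close>)
  also have "\<dots> = (\<Sum>z\<in>?C. w z * (\<Sum>p\<in>?fibre z. (?h p)\<^sup>2))"
    by (simp add: sum_distrib_left)
  also have "\<dots> \<le> (\<Sum>z\<in>?C. w z * (\<Sum>p\<in>?fibre z. ?h p)\<^sup>2)"
  proof (rule sum_mono, rule mult_left_mono[OF _ assms(5)])
    fix z
    show "(\<Sum>p\<in>?fibre z. (?h p)\<^sup>2) \<le> (\<Sum>p\<in>?fibre z. ?h p)\<^sup>2"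
      unfolding power2_eq_square sum_product
      by (rule sum_mono, rule member_le_sum) (use fin h_nonneg in \<open>auto intro: mult_nonneg_nonneg\<close>)
  qed
  finally show ?thesis .
qed

lemma Re_mult_nonneg_Reals:
  assumes "z \<in> \<real>" "0 \<le> Re z" "w \<in> \<real>" "0 \<le> Re w"
  shows "Re (z * w) = cmod z * cmod w"
  using assms by (auto elim!: Reals_cases)

lemma sum_cmod_le_cmod_lookup_times:
  fixes f g :: "'a::comm_monoid_add \<Rightarrow>\<^sub>0 complex"
  assumes "\<forall>\<alpha>. Poly_Mapping.lookup f \<alpha> \<in> \<real> \<and> 0 \<le> Re (Poly_Mapping.lookup f \<alpha>)"
    and "\<forall>\<alpha>. Poly_Mapping.lookup g \<alpha> \<in> \<real> \<and> 0 \<le> Re (Poly_Mapping.lookup g \<alpha>)"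
  shows "(\<Sum>x\<in>{x \<in> Poly_Mapping.keys f \<times> Poly_Mapping.keys g. fst x + snd x = k}.
      cmod (Poly_Mapping.lookup f (fst x)) * cmod (Poly_Mapping.lookup g (snd x)))
    \<le> cmod (Poly_Mapping.lookup (f * g) k)"
  unfolding lookup_times_eq_sum
  by (rule order_trans[OF eq_refl sum_Re_le_cmod], rule sum.cong)
    (simp_all only: Re_mult_nonneg_Reals assms)

theorem theorem4p1:
  fixes d :: nat and P Q :: "(nat \<Rightarrow>\<^sub>0 nat) \<Rightarrow>\<^sub>0 complex"
  assumes "in_vars d P" and "in_vars d Q"
    and "P \<noteq> 0" and "Q \<noteq> 0"
    and "\<forall>\<alpha>. Poly_Mapping.lookup P \<alpha> \<in> \<real> \<and> 0 \<le> Re (Poly_Mapping.lookup P \<alpha>)"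
    and "\<forall>\<alpha>. Poly_Mapping.lookup Q \<alpha> \<in> \<real> \<and> 0 \<le> Re (Poly_Mapping.lookup Q \<alpha>)"
  shows "apolar_norm (P * Q) \<ge> apolar_norm P * apolar_norm Q"
proof -
  let ?A = "Poly_Mapping.keys P" and ?B = "Poly_Mapping.keys Q"
  let ?C = "(\<lambda>(x, y). x + y) ` (?A \<times> ?B)"
  let ?p = "\<lambda>\<alpha>. cmod (Poly_Mapping.lookup P \<alpha>)" and ?q = "\<lambda>\<beta>. cmod (Poly_Mapping.lookup Q \<beta>)"
  have keys_PQ: "Poly_Mapping.keys (P * Q) \<subseteq> ?C"
    using keys_mult[of P Q] by auto
  have finite_C: "finite ?C"
    by simp
  have "(\<Sum>\<alpha>\<in>?A. mfact \<alpha> * (?p \<alpha>)\<^sup>2) * (\<Sum>\<beta>\<in>?B. mfact \<beta> * (?q \<beta>)\<^sup>2)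
      \<le> (\<Sum>\<gamma>\<in>?C. mfact \<gamma> *
            (\<Sum>x\<in>{x \<in> ?A \<times> ?B. fst x + snd x = \<gamma>}. ?p (fst x) * ?q (snd x))\<^sup>2)"
    by (rule convolution_weighted_square_sum_ge)
      (simp_all add: less_imp_le[OF mfact_pos] mfact_mult_le_mfact_add)
  also have "\<dots> \<le> (\<Sum>\<gamma>\<in>?C. mfact \<gamma> * (cmod (Poly_Mapping.lookup (P * Q) \<gamma>))\<^sup>2)"
    by (intro sum_mono mult_left_mono power_mono sum_cmod_le_cmod_lookup_times assms(5,6)
        sum_nonneg mult_nonneg_nonneg less_imp_le[OF mfact_pos]) simp_all
  finally show ?thesis
    unfolding apolar_norm_eq_sqrt_sum[OF finite_keys order_refl, of P]
      apolar_norm_eq_sqrt_sum[OF finite_keys order_refl, of Q]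
      apolar_norm_eq_sqrt_sum[OF finite_C keys_PQ] real_sqrt_mult[symmetric]
    by (simp add: real_sqrt_le_mono)
qed

end
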